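(* There exist nested $(v,4,1)$-BIBDs for all $v\equiv 4\pmod{12}$ with $16\le v\le 196$.
   Context: A $(v,k,\lambda)$-BIBD is a set $X$ of $v$ points with a multiset $\mathcal{A}$ of $k$-subsets (blocks) such that every pair of distinct points lies in exactly $\lambda$ blocks; a partial $(v,k,\lambda)$-BIBD has "at most $\lambda$". A $(v,4,1)$-BIBD is nested if there is a map $\phi:\mathcal{A}\to X$ such that $\{A\cup\{\phi(A)\}:A\in\mathcal{A}\}$ is the block multiset of a partial $(v,5,2)$-BIBD on $X$ (in particular $\phi(A)\notin A$). *)

theory Defs
  imports Main "HOL-Library.Multiset"
begin

definition partial_bibd :: "'a set \<Rightarrow> 'a set multiset \<Rightarrow> nat \<Rightarrow> nat \<Rightarrow> nat \<Rightarrow> bool" where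
  "partial_bibd X B v k lam \<longleftrightarrow>
     finite X \<and> card X = v \<and>
     (\<forall>A\<in>#B. A \<subseteq> X \<and> card A = k) \<and>
     (\<forall>x\<in>X. \<forall>y\<in>X. x \<noteq> y \<longrightarrow> size (filter_mset (\<lambda>A. x \<in> A \<and> y \<in> A) B) \<le> lam)"

definition bibd :: "'a set \<Rightarrow> 'a set multiset \<Rightarrow> nat \<Rightarrow> nat \<Rightarrow> nat \<Rightarrow> bool" where
  "bibd X B v k lam \<longleftrightarrow>
     finite X \<and> card X = v \<and>
     (\<forall>A\<in>#B. A \<subseteq> X \<and> card A = k) \<and>
     (\<forall>x\<in>X. \<forall>y\<in>X. x \<noteq> y \<longrightarrow> size (filter_mset (\<lambda>A. x \<in> A \<and> y \<in> A) B) = lam)"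

definition nested_bibd :: "'a set \<Rightarrow> 'a set multiset \<Rightarrow> nat \<Rightarrow> bool" where
  "nested_bibd X B v \<longleftrightarrow>
     bibd X B v 4 1 \<and>
     (\<exists>\<phi>. (\<forall>A\<in>#B. \<phi> A \<in> X \<and> \<phi> A \<notin> A) \<and>
          partial_bibd X (image_mset (\<lambda>A. insert (\<phi> A) A) B) v 5 2)"

end

theory Submission
  imports Defs
begin

(* For v = 3m + 1 >= 40 the design is 1-rotational over Z_3m: the points are the residues
   modulo 3m and a point at infinity, and the blocks are the translates D_j + i of base blocks
   D_j whose differences cover every residue not divisible by m exactly once, together with the
   m blocks {inf, i, i + m, i + 2m}.  The nest point p_j of D_j is translated along with it, and
   {inf, i, i + m, i + 2m} is nested with i + c.  The number of (nested) translates through a pair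
   {x, y} equals the number of times y - x occurs as a difference of a (nested) base block, so
   both conditions of a nested design reduce to multiplicities of residues in finite lists;
   these are verified by evaluation, after sorting the lists.  For v = 16 and v = 28 the blocks
   are listed explicitly and checked in the same way, coding a pair a < b of points as a v + b. *)

section \<open>Nested designs from indexed families of blocks\<close>

lemma size_filter_image_mset_mset_set:
  assumes "finite I"
  shows "size (filter_mset P (image_mset f (mset_set I))) = card {i \<in> I. P (f i)}"
  using assms by (simp add: filter_mset_image_mset o_def)

lemma inj_on_blocks_if_pairs_once:
  assumes "finite I"
    and blocks: "\<And>i. i \<in> I \<Longrightarrow> blk i \<subseteq> X \<and> 1 < card (blk i)"
    and once: "\<And>x y. x \<in> X \<Longrightarrow> y \<in> X \<Longrightarrow> x \<noteq> y \<Longrightarrow>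
      card {i \<in> I. x \<in> blk i \<and> y \<in> blk i} = 1"
  shows "inj_on blk I"
proof (rule inj_onI, rule ccontr)
  fix i j assume ij: "i \<in> I" "j \<in> I" "blk i = blk j" "i \<noteq> j"
  have "finite (blk i)" "\<not> card (blk i) \<le> Suc 0"
    using blocks[OF \<open>i \<in> I\<close>] card.infinite by fastforce+
  then obtain x y where xy: "x \<in> blk i" "y \<in> blk i" "x \<noteq> y"
    by (auto simp: card_le_Suc0_iff_eq)
  then have "x \<in> X" "y \<in> X"
    using blocks[OF \<open>i \<in> I\<close>] by auto
  have "card {i, j} \<le> card {k \<in> I. x \<in> blk k \<and> y \<in> blk k}"
    by (rule card_mono) (use \<open>finite I\<close> ij xy in auto)
  also have "\<dots> = 1"
    using once \<open>x \<in> X\<close> \<open>y \<in> X\<close> \<open>x \<noteq> y\<close> .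
  finally show False
    using \<open>i \<noteq> j\<close> by simp
qed

lemma nested_bibd_of_indexed_blocks:
  fixes blk :: "'i \<Rightarrow> 'a set" and nest :: "'i \<Rightarrow> 'a"
  assumes "finite I" "finite X"
    and blocks: "\<And>i. i \<in> I \<Longrightarrow> blk i \<subseteq> X \<and> card (blk i) = 4 \<and> nest i \<in> X - blk i"
    and once: "\<And>x y. x \<in> X \<Longrightarrow> y \<in> X \<Longrightarrow> x \<noteq> y \<Longrightarrow>
      card {i \<in> I. x \<in> blk i \<and> y \<in> blk i} = 1"
    and twice: "\<And>x y. x \<in> X \<Longrightarrow> y \<in> X \<Longrightarrow> x \<noteq> y \<Longrightarrow>
      card {i \<in> I. x \<in> insert (nest i) (blk i) \<and> y \<in> insert (nest i) (blk i)} \<le> 2"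
  shows "nested_bibd X (image_mset blk (mset_set I)) (card X)"
proof -
  have "inj_on blk I"
    by (rule inj_on_blocks_if_pairs_once[OF \<open>finite I\<close> _ once]) (use blocks in auto)
  define \<phi> where "\<phi> = nest \<circ> inv_into I blk"
  have \<phi>: "\<phi> (blk i) = nest i" if "i \<in> I" for i
    using \<open>inj_on blk I\<close> that by (simp add: \<phi>_def)
  have nested_blocks: "image_mset (\<lambda>A. insert (\<phi> A) A) (image_mset blk (mset_set I))
      = image_mset (\<lambda>i. insert (nest i) (blk i)) (mset_set I)"
    unfolding multiset.map_comp o_def
    by (rule image_mset_cong) (use \<open>finite I\<close> \<phi> in auto)
  have pair_count: "size (filter_mset (\<lambda>A. x \<in> A \<and> y \<in> A) (image_mset f (mset_set I)))
      = card {i \<in> I. x \<in> f i \<and> y \<in> f i}" for f :: "'i \<Rightarrow> 'a set" and x y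
    using size_filter_image_mset_mset_set[OF \<open>finite I\<close>] .
  have bibd: "bibd X (image_mset blk (mset_set I)) (card X) 4 1"
    unfolding bibd_def pair_count
  proof (intro conjI ballI impI)
    fix A assume "A \<in># image_mset blk (mset_set I)"
    then obtain i where "i \<in> I" and "A = blk i"
      using \<open>finite I\<close> by auto
    then show "A \<subseteq> X" "card A = 4"
      using blocks by auto
  qed (simp_all add: \<open>finite X\<close> once)
  have partial: "partial_bibd X (image_mset (\<lambda>A. insert (\<phi> A) A) (image_mset blk (mset_set I))) (card X) 5 2"
    unfolding partial_bibd_def nested_blocks pair_count
  proof (intro conjI ballI impI)
    fix A assume "A \<in># image_mset (\<lambda>i. insert (nest i) (blk i)) (mset_set I)"
    then obtain i where "i \<in> I" and A: "A = insert (nest i) (blk i)"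
      using \<open>finite I\<close> by auto
    moreover have "finite (blk i)"
      using blocks[OF \<open>i \<in> I\<close>] \<open>finite X\<close> finite_subset by blast
    ultimately show "A \<subseteq> X" "card A = 5"
      using blocks[OF \<open>i \<in> I\<close>] by auto
  qed (simp_all add: \<open>finite X\<close> twice del: insert_iff)
  have points: "\<forall>A\<in>#image_mset blk (mset_set I). \<phi> A \<in> X \<and> \<phi> A \<notin> A"
    using blocks \<phi> \<open>finite I\<close> by auto
  show ?thesis
    unfolding nested_bibd_def using bibd points partial by blast
qed

lemma count_list_map_distinct:
  "distinct xs \<Longrightarrow> count_list (map f xs) y = card {x \<in> set xs. f x = y}"
proof (induction xs)
  case (Cons x xs)
  have "{z \<in> set (x # xs). f z = y}
      = (if f x = y then insert x {z \<in> set xs. f z = y} else {z \<in> set xs. f z = y})"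
    by auto
  with Cons show ?case
    by (auto simp: card_insert_if)
qed simp

lemma count_list_distinct: "distinct xs \<Longrightarrow> count_list xs y = (if y \<in> set xs then 1 else 0)"
  by (metis count_mset distinct_count_atmost_1)

lemma count_list_concat_map_eq_sum:
  "count_list (concat (map f xs)) y = (\<Sum>j<length xs. count_list (f (xs ! j)) y)"
  by (simp add: count_list_concat sum_list_sum_nth atLeast0LessThan)

lemma card_Plus_Collect:
  assumes "finite A" "finite B"
  shows "card {k \<in> A <+> B. P k} = card {a \<in> A. P (Inl a)} + card {b \<in> B. P (Inr b)}"
proof -
  have "{k \<in> A <+> B. P k} = {a \<in> A. P (Inl a)} <+> {b \<in> B. P (Inr b)}"
    by auto
  then show ?thesis
    using assms by (simp add: card_Plus)
qed

section \<open>Multiplicities by sorting\<close>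

(* A merge sort of our own: simp evaluates it much faster than the insertion sort List.sort. *)

fun merge :: "'a::linorder list \<Rightarrow> 'a list \<Rightarrow> 'a list" where
  "merge [] ys = ys"
| "merge xs [] = xs"
| "merge (x # xs) (y # ys) = (if x \<le> y then x # merge xs (y # ys) else y # merge (x # xs) ys)"

fun deal :: "'a list \<Rightarrow> 'a list \<times> 'a list" where
  "deal [] = ([], [])"
| "deal [x] = ([x], [])"
| "deal (x # y # zs) = (case deal zs of (xs, ys) \<Rightarrow> (x # xs, y # ys))"

lemma length_deal: "deal zs = (xs, ys) \<Longrightarrow> length xs \<le> length zs \<and> length ys \<le> length zs"
  by (induction zs arbitrary: xs ys rule: deal.induct) (auto split: prod.splits)

function msort :: "'a::linorder list \<Rightarrow> 'a list" where
  "msort [] = []"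
| "msort [x] = [x]"
| "msort (x # y # zs) = (case deal zs of (xs, ys) \<Rightarrow> merge (msort (x # xs)) (msort (y # ys)))"
  by pat_completeness auto
termination
  by (relation "measure length") (fastforce dest: length_deal[OF sym])+

lemma mset_merge [simp]: "mset (merge xs ys) = mset xs + mset ys"
  by (induction xs ys rule: merge.induct) auto

lemma mset_deal: "deal zs = (xs, ys) \<Longrightarrow> mset xs + mset ys = mset zs"
  by (induction zs arbitrary: xs ys rule: deal.induct) (auto split: prod.splits)

lemma mset_msort [simp]: "mset (msort xs) = mset xs"
  by (induction xs rule: msort.induct) (auto split: prod.split dest!: mset_deal)

lemma set_merge [simp]: "set (merge xs ys) = set xs \<union> set ys"
  by (metis mset_merge set_mset_mset set_mset_union)

lemma sorted_merge: "sorted xs \<Longrightarrow> sorted ys \<Longrightarrow> sorted (merge xs ys)"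
proof (induction xs ys rule: merge.induct)
  case (3 x xs y ys)
  then show ?case
    by (cases "x \<le> y") auto
qed auto

lemma sorted_msort: "sorted (msort xs)"
  by (induction xs rule: msort.induct) (auto split: prod.split intro: sorted_merge)

fun no_triples :: "'a list \<Rightarrow> bool" where
  "no_triples (a # b # c # xs) \<longleftrightarrow> a \<noteq> c \<and> no_triples (b # c # xs)"
| "no_triples _ \<longleftrightarrow> True"

lemma count_list_le_2_if_no_triples: "sorted xs \<Longrightarrow> no_triples xs \<Longrightarrow> count_list xs y \<le> 2"
proof (induction xs rule: no_triples.induct)
  case (1 a b c xs)
  show ?case
  proof (cases "y = a")
    case True
    have "a < c" "\<forall>z\<in>set xs. c \<le> z"
      using "1.prems" by auto
    with True have "count_list (c # xs) y = 0"
      by (auto simp: count_list_0_iff)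
    then show ?thesis
      by simp
  next
    case False
    have "count_list (b # c # xs) y \<le> 2"
      using "1.prems" by (intro "1.IH") auto
    with False show ?thesis
      by simp
  qed
qed simp_all

lemma count_list_msort [simp]: "count_list (msort xs) y = count_list xs y"
  by (metis count_mset mset_msort)

lemma count_list_le_2_if_msort_no_triples: "no_triples (msort xs) \<Longrightarrow> count_list xs y \<le> 2"
  using count_list_le_2_if_no_triples[OF sorted_msort] by simp

section \<open>Differences and translates in the cyclic group of order n\<close>

(* The residue of b - a modulo n; because of truncated subtraction only meaningful for a \<le> n. *)
definition zdiff :: "nat \<Rightarrow> nat \<Rightarrow> nat \<Rightarrow> nat" where
  "zdiff n a b = (b + n - a) mod n"

lemma int_zdiff:
  assumes "a \<le> n"
  shows "int (zdiff n a b) = (int b - int a) mod int n"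
proof -
  have "int (b + n - a) = (int b - int a) + int n"
    using assms by simp
  then show ?thesis
    by (simp add: zdiff_def zmod_int)
qed

lemma zdiff_less: "0 < n \<Longrightarrow> zdiff n a b < n"
  by (simp add: zdiff_def)

lemma zdiff_eq_iff: "a \<le> n \<Longrightarrow> d < n \<Longrightarrow> zdiff n a b = d \<longleftrightarrow> (int b - int a) mod int n = int d"
  by (metis int_zdiff of_nat_eq_iff)

lemma zdiff_self [simp]: "zdiff n a a = 0"
  by (simp add: zdiff_def)

lemma zdiff_eq_0_iff: "a < n \<Longrightarrow> b < n \<Longrightarrow> zdiff n a b = 0 \<longleftrightarrow> a = b"
  unfolding zdiff_def using mod_if by force

lemma zdiff_mod_eq_0_iff:
  assumes "m dvd n" "x < n"
  shows "zdiff n x y mod m = 0 \<longleftrightarrow> x mod m = y mod m"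
proof -
  have "int (zdiff n x y mod m) = (int y - int x) mod int n mod int m"
    using assms by (simp add: zmod_int int_zdiff)
  also have "\<dots> = (int y - int x) mod int m"
    using assms by (simp add: mod_mod_cancel)
  finally have "zdiff n x y mod m = 0 \<longleftrightarrow> (int y - int x) mod int m = 0"
    by linarith
  also have "\<dots> \<longleftrightarrow> int y mod int m = int x mod int m"
    by (simp add: mod_eq_dvd_iff mod_eq_0_iff_dvd)
  also have "\<dots> \<longleftrightarrow> x mod m = y mod m"
    by (metis of_nat_eq_iff of_nat_mod)
  finally show ?thesis .
qed

lemma zdiff_zdiff: "i \<le> n \<Longrightarrow> x < n \<Longrightarrow> y < n \<Longrightarrow> zdiff n (zdiff n i x) (zdiff n i y) = zdiff n x y"
  by (simp add: zdiff_eq_iff zdiff_less less_imp_le int_zdiff mod_diff_eq)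

lemma zdiff_zdiff_shift:
  assumes "a < n" "b < n" "x < n" "y < n" "zdiff n a b = zdiff n x y"
  shows "zdiff n (zdiff n a x) y = b"
proof -
  have hyp: "(int y - int x) mod int n = (int b - int a) mod int n"
    using assms int_zdiff[of a n b] int_zdiff[of x n y] by simp
  have "zdiff n a x \<le> n"
    using assms zdiff_less[of n a x] by simp
  then have "int (zdiff n (zdiff n a x) y) = (int y - int (zdiff n a x)) mod int n"
    by (rule int_zdiff)
  also have "\<dots> = (int y - (int x - int a) mod int n) mod int n"
    using assms int_zdiff[of a n x] by simp
  also have "\<dots> = ((int y - int x) + int a) mod int n"
    by (simp add: mod_diff_right_eq diff_diff_eq2 diff_add_eq)
  also have "\<dots> = ((int y - int x) mod int n + int a) mod int n"
    by (simp add: mod_add_left_eq)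
  also have "\<dots> = int b"
    using assms by (simp add: hyp mod_add_left_eq)
  finally show ?thesis
    by simp
qed

lemma zdiff_eq_iff_mod_add:
  assumes "i < n" "x < n" "z < n"
  shows "zdiff n i x = z \<longleftrightarrow> x = (z + i) mod n"
proof -
  have "x = (z + i) mod n \<longleftrightarrow> int x = (int z + int i) mod int n"
    by (metis of_nat_add of_nat_eq_iff of_nat_mod)
  also have "\<dots> \<longleftrightarrow> int x mod int n = (int z + int i) mod int n"
    using assms by simp
  also have "\<dots> \<longleftrightarrow> (int x - int i) mod int n = int z mod int n"
    by (simp add: mod_eq_dvd_iff algebra_simps)
  also have "\<dots> \<longleftrightarrow> zdiff n i x = z"
    using assms by (simp add: zdiff_eq_iff)
  finally show ?thesis
    by simp
qed

lemma zdiff_zdiff_cancel: "a < n \<Longrightarrow> x < n \<Longrightarrow> zdiff n (zdiff n a x) x = a"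
  by (rule zdiff_zdiff_shift) simp_all

lemma zdiff_add_mod:
  assumes "i < n" "z < n"
  shows "zdiff n i ((z + i) mod n) = z"
proof -
  have "(z + i) mod n < n"
    using assms by simp
  from zdiff_eq_iff_mod_add[OF assms(1) this assms(2)] show ?thesis
    by blast
qed

lemma add_zdiff_mod:
  assumes "i < n" "x < n"
  shows "(zdiff n i x + i) mod n = x"
proof -
  have "zdiff n i x < n"
    using assms by (simp add: zdiff_less)
  from zdiff_eq_iff_mod_add[OF assms this] show ?thesis
    by simp
qed

lemma zdiff_left_inject: "i < n \<Longrightarrow> x < n \<Longrightarrow> y < n \<Longrightarrow> zdiff n i x = zdiff n i y \<longleftrightarrow> x = y"
  by (metis add_zdiff_mod)

definition translate :: "nat \<Rightarrow> nat \<Rightarrow> nat set \<Rightarrow> nat set" where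
  "translate n i S = (\<lambda>z. (z + i) mod n) ` S"

lemma translate_subset: "0 < n \<Longrightarrow> translate n i S \<subseteq> {..<n}"
  unfolding translate_def by (simp add: image_subset_iff)

lemma translate_insert: "translate n i (insert z S) = insert ((z + i) mod n) (translate n i S)"
  by (simp add: translate_def)

lemma mem_translate_iff:
  assumes "S \<subseteq> {..<n}" "i < n" "x < n"
  shows "x \<in> translate n i S \<longleftrightarrow> zdiff n i x \<in> S"
proof
  assume "x \<in> translate n i S"
  then obtain z where "z \<in> S" and x: "x = (z + i) mod n"
    unfolding translate_def by blast
  moreover have "z < n"
    using \<open>z \<in> S\<close> assms(1) by blast
  ultimately show "zdiff n i x \<in> S"
    using zdiff_eq_iff_mod_add[OF assms(2,3) \<open>z < n\<close>] by simp
next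
  assume z: "zdiff n i x \<in> S"
  then have "zdiff n i x < n"
    using assms(1) by blast
  then have "x = (zdiff n i x + i) mod n"
    using zdiff_eq_iff_mod_add[OF assms(2,3)] by blast
  with z show "x \<in> translate n i S"
    unfolding translate_def by blast
qed

lemma inj_on_translate:
  fixes n :: nat
  assumes "i < n"
  shows "inj_on (\<lambda>z. (z + i) mod n) {..<n}"
proof (rule inj_onI)
  fix a b assume "a \<in> {..<n}" "b \<in> {..<n}" and eq: "(a + i) mod n = (b + i) mod n"
  have "a = zdiff n i ((a + i) mod n)"
    using assms \<open>a \<in> {..<n}\<close> by (simp add: zdiff_add_mod)
  also have "\<dots> = zdiff n i ((b + i) mod n)"
    by (simp only: eq)
  also have "\<dots> = b"
    using assms \<open>b \<in> {..<n}\<close> by (simp add: zdiff_add_mod)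
  finally show "a = b" .
qed

lemma card_translate: "S \<subseteq> {..<n} \<Longrightarrow> i < n \<Longrightarrow> card (translate n i S) = card S"
  unfolding translate_def by (intro card_image inj_on_subset[OF inj_on_translate])

lemma card_translates_containing_pair:
  assumes S: "S \<subseteq> {..<n}" and "x < n" "y < n"
  shows "card {i \<in> {..<n}. x \<in> translate n i S \<and> y \<in> translate n i S}
       = card {(a, b) \<in> S \<times> S. zdiff n a b = zdiff n x y}"
    (is "card ?I = card ?P")
proof (rule bij_betw_same_card)
  have "0 < n"
    using assms by simp
  show "bij_betw (\<lambda>i. (zdiff n i x, zdiff n i y)) ?I ?P"
  proof (rule bij_betw_byWitness[where f' = "\<lambda>(a, b). zdiff n a x"])
    show "\<forall>i\<in>?I. (\<lambda>(a, b). zdiff n a x) (zdiff n i x, zdiff n i y) = i"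
      using \<open>x < n\<close> by (simp add: zdiff_zdiff_cancel)
    show "(\<lambda>i. (zdiff n i x, zdiff n i y)) ` ?I \<subseteq> ?P"
      using assms by (auto simp: mem_translate_iff zdiff_zdiff)
    have "zdiff n (zdiff n a x) x = a" "zdiff n (zdiff n a x) y = b"
      if "(a, b) \<in> ?P" for a b
    proof -
      have "a < n" "b < n"
        using that S by auto
      with that assms show "zdiff n (zdiff n a x) x = a" "zdiff n (zdiff n a x) y = b"
        by (auto intro: zdiff_zdiff_cancel zdiff_zdiff_shift)
    qed
    then show "\<forall>ab\<in>?P. (\<lambda>i. (zdiff n i x, zdiff n i y)) ((\<lambda>(a, b). zdiff n a x) ab) = ab"
      and "(\<lambda>(a, b). zdiff n a x) ` ?P \<subseteq> ?I"
      using assms \<open>0 < n\<close> by (auto simp: mem_translate_iff zdiff_less)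
  qed
qed

definition diff_list :: "nat \<Rightarrow> nat list \<Rightarrow> nat list" where
  "diff_list n D = map (\<lambda>(a, b). zdiff n a b) (filter (\<lambda>(a, b). a \<noteq> b) (List.product D D))"

lemma zdiff_mem_diff_list: "a \<in> set D \<Longrightarrow> b \<in> set D \<Longrightarrow> a \<noteq> b \<Longrightarrow> zdiff n a b \<in> set (diff_list n D)"
  by (force simp: diff_list_def)

lemma count_diff_list:
  assumes "distinct D" "d \<noteq> 0"
  shows "count_list (diff_list n D) d = card {(a, b) \<in> set D \<times> set D. zdiff n a b = d}"
proof -
  have "count_list (diff_list n D) d
      = card {z \<in> set (filter (\<lambda>(a, b). a \<noteq> b) (List.product D D)). (\<lambda>(a, b). zdiff n a b) z = d}"
    unfolding diff_list_def using assms(1) by (intro count_list_map_distinct) (simp add: distinct_product)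
  also have "\<dots> = card {(a, b) \<in> set D \<times> set D. zdiff n a b = d}"
    using assms(2) by (intro arg_cong[where f = card]) auto
  finally show ?thesis .
qed

lemma card_translates_eq_count_diff_list:
  assumes "distinct D" "set D \<subseteq> {..<n}" "x < n" "y < n" "x \<noteq> y"
  shows "card {i \<in> {..<n}. x \<in> translate n i (set D) \<and> y \<in> translate n i (set D)}
       = count_list (diff_list n D) (zdiff n x y)"
proof -
  have "zdiff n x y \<noteq> 0"
    using assms by (simp add: zdiff_eq_0_iff)
  show ?thesis
    unfolding card_translates_containing_pair[OF assms(2-4)] count_diff_list[OF assms(1) \<open>zdiff n x y \<noteq> 0\<close>] ..
qed

lemma card_development_eq_sum:
  fixes t :: nat
  assumes "\<And>j. j < t \<Longrightarrow> distinct (B j) \<and> set (B j) \<subseteq> {..<n}" "x < n" "y < n" "x \<noteq> y"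
  shows "card {(j, i) \<in> {..<t} \<times> {..<n}. x \<in> translate n i (set (B j)) \<and> y \<in> translate n i (set (B j))}
       = (\<Sum>j<t. count_list (diff_list n (B j)) (zdiff n x y))"
proof -
  let ?P = "\<lambda>j i. x \<in> translate n i (set (B j)) \<and> y \<in> translate n i (set (B j))"
  have Sigma: "{(j, i) \<in> {..<t} \<times> {..<n}. ?P j i} = Sigma {..<t} (\<lambda>j. {i \<in> {..<n}. ?P j i})"
    by auto
  have "card {(j, i) \<in> {..<t} \<times> {..<n}. ?P j i} = (\<Sum>j<t. card {i \<in> {..<n}. ?P j i})"
    unfolding Sigma by (rule card_SigmaI) auto
  also have "\<dots> = (\<Sum>j<t. count_list (diff_list n (B j)) (zdiff n x y))"
    by (intro sum.cong refl card_translates_eq_count_diff_list) (use assms in auto)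
  finally show ?thesis .
qed

section \<open>The short orbit\<close>

definition short_block :: "nat \<Rightarrow> nat \<Rightarrow> nat set" where
  "short_block m i = {3 * m, i, i + m, i + 2 * m}"

lemma mem_short_block_iff:
  assumes "x < 3 * m" "i < m"
  shows "x \<in> short_block m i \<longleftrightarrow> x mod m = i"
proof
  assume "x \<in> short_block m i"
  with assms show "x mod m = i"
    by (auto simp: short_block_def)
next
  assume "x mod m = i"
  moreover have "x div m < 3"
    using assms by (simp add: div_less_iff_less_mult mult.commute)
  then have "x div m = 0 \<or> x div m = 1 \<or> x div m = 2"
    by auto
  moreover have "x = x div m * m + x mod m"
    by simp
  ultimately show "x \<in> short_block m i"
    unfolding short_block_def by auto
qed

definition nonmultiples :: "nat \<Rightarrow> nat list" where
  "nonmultiples m = [1..<m] @ [Suc m..<2 * m] @ [Suc (2 * m)..<3 * m]"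

lemma count_list_nonmultiples:
  "count_list (nonmultiples m) d = (if d < 3 * m \<and> d mod m \<noteq> 0 then 1 else 0)"
proof (cases "m = 0")
  case True
  then show ?thesis
    by (simp add: nonmultiples_def)
next
  case False
  have "d < 3 * m \<Longrightarrow> d mod m = 0 \<longleftrightarrow> d \<in> short_block m 0"
    using False by (simp add: mem_short_block_iff)
  then have "d \<in> set (nonmultiples m) \<longleftrightarrow> d < 3 * m \<and> d mod m \<noteq> 0"
    by (auto simp: nonmultiples_def short_block_def)
  moreover have "distinct (nonmultiples m)"
    by (auto simp: nonmultiples_def)
  ultimately show ?thesis
    by (simp add: count_list_distinct)
qed

lemma card_short_blocks_containing_pair:
  assumes "x < 3 * m" "y < 3 * m"
  shows "card {i \<in> {..<m}. x \<in> short_block m i \<and> y \<in> short_block m i}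
       = (if x mod m = y mod m then 1 else 0)"
proof -
  have "{i \<in> {..<m}. x \<in> short_block m i \<and> y \<in> short_block m i}
      = (if x mod m = y mod m then {x mod m} else {})"
    using assms by (auto simp: mem_short_block_iff)
  then show ?thesis
    by simp
qed

lemma card_short_blocks_containing_infinity:
  assumes "y < 3 * m"
  shows "card {i \<in> {..<m}. 3 * m \<in> short_block m i \<and> y \<in> short_block m i} = 1"
proof -
  have "{i \<in> {..<m}. 3 * m \<in> short_block m i \<and> y \<in> short_block m i} = {y mod m}"
    using assms by (auto simp: mem_short_block_iff) (auto simp: short_block_def)
  then show ?thesis
    by simp
qed

lemma insert_short_block_eq_translate:
  "i < m \<Longrightarrow> c < m \<Longrightarrow>
    insert (i + c) (short_block m i) = insert (3 * m) (translate (3 * m) i {c, 0, m, 2 * m})"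
  by (auto simp: short_block_def translate_def)

lemma card_nested_short_blocks_containing_infinity:
  assumes "y < 3 * m"
  shows "card {i \<in> {..<m}. 3 * m \<in> insert (i + c) (short_block m i) \<and> y \<in> insert (i + c) (short_block m i)} \<le> 2"
proof -
  have "{i \<in> {..<m}. 3 * m \<in> insert (i + c) (short_block m i) \<and> y \<in> insert (i + c) (short_block m i)}
      \<subseteq> {y mod m, y - c}"
    using assms by (auto simp: mem_short_block_iff)
  then have "card {i \<in> {..<m}. 3 * m \<in> insert (i + c) (short_block m i) \<and> y \<in> insert (i + c) (short_block m i)}
      \<le> card {y mod m, y - c}"
    by (intro card_mono) auto
  also have "\<dots> \<le> 2"
    by (simp add: card_insert_if)
  finally show ?thesis .
qed

lemma nested_short_blocks_unique:
  assumes c: "0 < c" "c < m" "(2 * c) mod m \<noteq> 0"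
    and xy: "x < 3 * m" "y < 3 * m" "x \<noteq> y"
    and "i < m" "j < m"
    and i: "x \<in> insert (i + c) (short_block m i)" "y \<in> insert (i + c) (short_block m i)"
    and j: "x \<in> insert (j + c) (short_block m j)" "y \<in> insert (j + c) (short_block m j)"
  shows "i = j"
proof -
  have rotate: "(k + c) mod m \<noteq> k" if "k < m" for k
  proof
    assume "(k + c) mod m = k"
    then have "m dvd c"
      using that by (metis add_diff_cancel_left' le_add1 mod_eq_dvd_iff_nat mod_less)
    with c show False
      by (simp add: nat_dvd_not_less)
  qed
  have rotate2: "((k + c) mod m + c) mod m \<noteq> k" if "k < m" for k
  proof
    assume "((k + c) mod m + c) mod m = k"
    then have "(k + 2 * c) mod m = k mod m"
      using that by (simp add: mod_add_left_eq add.assoc mult_2)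
    then have "m dvd 2 * c"
      by (metis add_diff_cancel_left' le_add1 mod_eq_dvd_iff_nat)
    with c show False
      by (simp add: mod_eq_0_iff_dvd)
  qed
  have mem: "z \<in> insert (k + c) (short_block m k) \<longleftrightarrow> z = k + c \<or> z mod m = k"
    if "z < 3 * m" "k < m" for z k
    using that by (auto simp: mem_short_block_iff)
  (* Two distinct common blocks i and j would each contain one of x, y as nest point and the
     other in its class; then j = (i + c) mod m and i = (j + c) mod m. *)
  have "(x = i + c \<or> x mod m = i) \<and> (y = i + c \<or> y mod m = i)"
    and "(x = j + c \<or> x mod m = j) \<and> (y = j + c \<or> y mod m = j)"
    using i j xy \<open>i < m\<close> \<open>j < m\<close> mem by blast+
  with xy rotate[OF \<open>i < m\<close>] rotate[OF \<open>j < m\<close>] rotate2[OF \<open>i < m\<close>] rotate2[OF \<open>j < m\<close>]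
  show "i = j"
    by auto
qed

lemma card_nested_short_blocks_containing_pair:
  assumes c: "0 < c" "c < m" "(2 * c) mod m \<noteq> 0"
    and xy: "x < 3 * m" "y < 3 * m" "x \<noteq> y"
  shows "card {i \<in> {..<m}. x \<in> insert (i + c) (short_block m i) \<and> y \<in> insert (i + c) (short_block m i)}
       \<le> (if zdiff (3 * m) x y \<in> set (diff_list (3 * m) [c, 0, m, 2 * m]) then 1 else 0)"
proof -
  let ?S = "{i \<in> {..<m}. x \<in> insert (i + c) (short_block m i) \<and> y \<in> insert (i + c) (short_block m i)}"
  have "card ?S \<le> 1"
    using nested_short_blocks_unique[OF c xy] by (auto simp: card_le_Suc0_iff_eq)
  moreover have "zdiff (3 * m) x y \<in> set (diff_list (3 * m) [c, 0, m, 2 * m])" if "i \<in> ?S" for i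
  proof -
    let ?F = "{c, 0, m, 2 * m}"
    have "i < m"
      using that by simp
    then have eq: "insert (i + c) (short_block m i) = insert (3 * m) (translate (3 * m) i ?F)"
      using c(2) by (rule insert_short_block_eq_translate)
    have "x \<in> insert (3 * m) (translate (3 * m) i ?F)" "y \<in> insert (3 * m) (translate (3 * m) i ?F)"
      using that unfolding eq[symmetric] by simp_all
    then have "x \<in> translate (3 * m) i ?F" "y \<in> translate (3 * m) i ?F"
      using xy by simp_all
    moreover have "?F \<subseteq> {..<3 * m}"
      using c by auto
    ultimately have "zdiff (3 * m) i x \<in> ?F" "zdiff (3 * m) i y \<in> ?F"
      using xy \<open>i < m\<close> by (simp_all add: mem_translate_iff)
    moreover have "zdiff (3 * m) i x \<noteq> zdiff (3 * m) i y"
      using xy \<open>i < m\<close> by (simp add: zdiff_left_inject)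
    ultimately show ?thesis
      using zdiff_mem_diff_list[of "zdiff (3 * m) i x" "[c, 0, m, 2 * m]" "zdiff (3 * m) i y" "3 * m"]
        zdiff_zdiff[of i "3 * m" x y] xy \<open>i < m\<close> by simp
  qed
  ultimately show ?thesis
    by (cases "?S = {}") auto
qed

section \<open>The 1-rotational construction\<close>

definition is_nested_block :: "nat \<Rightarrow> nat list \<times> nat \<Rightarrow> bool" where
  "is_nested_block n = (\<lambda>(D, p). length D = 4 \<and> distinct (p # D) \<and> list_all (\<lambda>z. z < n) (p # D))"

lemma nested_block_nth:
  assumes "list_all (is_nested_block n) Ds" "j < length Ds"
  shows "length (fst (Ds ! j)) = 4" "distinct (snd (Ds ! j) # fst (Ds ! j))"
    "set (snd (Ds ! j) # fst (Ds ! j)) \<subseteq> {..<n}"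
proof -
  have "is_nested_block n (Ds ! j)"
    using assms by (simp add: list_all_length)
  then show "length (fst (Ds ! j)) = 4" "distinct (snd (Ds ! j) # fst (Ds ! j))"
    "set (snd (Ds ! j) # fst (Ds ! j)) \<subseteq> {..<n}"
    by (auto simp: is_nested_block_def list_all_iff split: prod.splits)
qed

(* The point at infinity is 3m, and difference_family says that the base blocks form a
   difference family in Z_3m relative to the subgroup {0, m, 2m}.  The nested short block
   {inf, i, i + m, i + 2m, i + c} is inf together with a translate of {c, 0, m, 2m}, and two of
   them never share a pair because 2c is not divisible by m; hence the differences of
   {c, 0, m, 2m} count only once in nested_differences. *)
locale cyclic_nesting =
  fixes m c :: nat and Ds :: "(nat list \<times> nat) list"
  assumes shift: "0 < c" "c < m" "(2 * c) mod m \<noteq> 0"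
    and base_blocks: "list_all (is_nested_block (3 * m)) Ds"
    and difference_family:
      "\<And>d. count_list (concat (map (diff_list (3 * m) \<circ> fst) Ds)) d
        = (if d < 3 * m \<and> d mod m \<noteq> 0 then 1 else 0)"
    and nested_differences:
      "\<And>d. count_list (concat (map (\<lambda>(D, p). diff_list (3 * m) (p # D)) Ds)) d
        + (if d \<in> set (diff_list (3 * m) [c, 0, m, 2 * m]) then 1 else 0) \<le> 2"
begin

abbreviation n :: nat where
  "n \<equiv> 3 * m"

definition index :: "((nat \<times> nat) + nat) set" where
  "index = ({..<length Ds} \<times> {..<n}) <+> {..<m}"

fun block :: "(nat \<times> nat) + nat \<Rightarrow> nat set" where
  "block (Inl (j, i)) = translate n i (set (fst (Ds ! j)))"
| "block (Inr i) = short_block m i"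

fun nest_point :: "(nat \<times> nat) + nat \<Rightarrow> nat" where
  "nest_point (Inl (j, i)) = (snd (Ds ! j) + i) mod n"
| "nest_point (Inr i) = i + c"

lemmas base_block = nested_block_nth[OF base_blocks]

lemma nested_block_Inl:
  "insert (nest_point (Inl (j, i))) (block (Inl (j, i))) = translate n i (set (snd (Ds ! j) # fst (Ds ! j)))"
  by (simp add: translate_insert)

lemma infinity_notin_nested_block_Inl:
  "n \<notin> insert (nest_point (Inl (j, i))) (block (Inl (j, i)))"
proof -
  have "translate n i (set (snd (Ds ! j) # fst (Ds ! j))) \<subseteq> {..<n}"
    using shift by (intro translate_subset) simp
  then show ?thesis
    unfolding nested_block_Inl by auto
qed

lemma block_wellformed:
  assumes "k \<in> index"
  shows "block k \<subseteq> {..n} \<and> card (block k) = 4 \<and> nest_point k \<in> {..n} - block k"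
proof (cases k)
  case (Inl ji)
  then obtain j i where k: "k = Inl (j, i)" and "j < length Ds" "i < n"
    using assms by (cases ji) (auto simp: index_def)
  note D = base_block[OF \<open>j < length Ds\<close>]
  have "card (block k) = 4"
    using D card_translate[of "set (fst (Ds ! j))" n i] \<open>i < n\<close> by (simp add: k distinct_card)
  moreover have "card (insert (nest_point k) (block k)) = 5"
    using D card_translate[of "set (snd (Ds ! j) # fst (Ds ! j))" n i] \<open>i < n\<close>
    unfolding k nested_block_Inl by (simp add: distinct_card)
  moreover have "insert (nest_point k) (block k) \<subseteq> {..<n}"
    using \<open>i < n\<close> translate_subset[of n i] unfolding k nested_block_Inl by simp
  ultimately show ?thesis
    by (auto simp: insert_absorb)
next
  case (Inr i)
  with assms shift show ?thesis
    by (auto simp: index_def short_block_def card_insert_if)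
qed

lemma card_index_Collect:
  "card {k \<in> index. P k}
    = card {(j, i) \<in> {..<length Ds} \<times> {..<n}. P (Inl (j, i))} + card {i \<in> {..<m}. P (Inr i)}"
proof -
  have "card {k \<in> index. P k} = card {a \<in> {..<length Ds} \<times> {..<n}. P (Inl a)} + card {i \<in> {..<m}. P (Inr i)}"
    unfolding index_def by (rule card_Plus_Collect) auto
  also have "{a \<in> {..<length Ds} \<times> {..<n}. P (Inl a)} = {(j, i) \<in> {..<length Ds} \<times> {..<n}. P (Inl (j, i))}"
    by auto
  finally show ?thesis .
qed

lemma card_developments_containing_pair:
  assumes "x < n" "y < n" "x \<noteq> y"
  shows "card {(j, i) \<in> {..<length Ds} \<times> {..<n}. x \<in> block (Inl (j, i)) \<and> y \<in> block (Inl (j, i))}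
      = count_list (concat (map (diff_list n \<circ> fst) Ds)) (zdiff n x y)"
proof -
  have "card {(j, i) \<in> {..<length Ds} \<times> {..<n}. x \<in> block (Inl (j, i)) \<and> y \<in> block (Inl (j, i))}
      = (\<Sum>j<length Ds. count_list (diff_list n (fst (Ds ! j))) (zdiff n x y))"
    unfolding block.simps by (rule card_development_eq_sum) (use base_block assms in auto)
  then show ?thesis
    by (simp add: count_list_concat_map_eq_sum)
qed

lemma card_nested_developments_containing_pair:
  assumes "x < n" "y < n" "x \<noteq> y"
  shows "card {(j, i) \<in> {..<length Ds} \<times> {..<n}.
          x \<in> insert (nest_point (Inl (j, i))) (block (Inl (j, i))) \<and>
          y \<in> insert (nest_point (Inl (j, i))) (block (Inl (j, i)))}
      = count_list (concat (map (\<lambda>(D, p). diff_list n (p # D)) Ds)) (zdiff n x y)"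
proof -
  have "card {(j, i) \<in> {..<length Ds} \<times> {..<n}.
          x \<in> insert (nest_point (Inl (j, i))) (block (Inl (j, i))) \<and>
          y \<in> insert (nest_point (Inl (j, i))) (block (Inl (j, i)))}
      = (\<Sum>j<length Ds. count_list (diff_list n (snd (Ds ! j) # fst (Ds ! j))) (zdiff n x y))"
    unfolding nested_block_Inl by (rule card_development_eq_sum) (use base_block assms in auto)
  then show ?thesis
    by (simp add: count_list_concat_map_eq_sum case_prod_beta)
qed

lemma blocks_containing_pair:
  assumes "x \<in> {..n}" "y \<in> {..n}" "x \<noteq> y"
  shows "card {k \<in> index. x \<in> block k \<and> y \<in> block k} = 1"
proof -
  have infinity: "card {k \<in> index. n \<in> block k \<and> z \<in> block k} = 1" if "z < n" for z
    using that card_short_blocks_containing_infinity[of z m] infinity_notin_nested_block_Inl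
    by (simp add: card_index_Collect)
  consider "x < n" "y < n" | "x = n" "y < n" | "y = n" "x < n"
    using assms by fastforce
  then show ?thesis
  proof cases
    case 1
    have "zdiff n x y < n" "zdiff n x y mod m = 0 \<longleftrightarrow> x mod m = y mod m"
      using 1 shift by (simp_all add: zdiff_less zdiff_mod_eq_0_iff)
    then show ?thesis
      unfolding card_index_Collect card_developments_containing_pair[OF 1 \<open>x \<noteq> y\<close>]
      unfolding block.simps card_short_blocks_containing_pair[OF 1]
      by (simp add: difference_family)
  next
    case 2
    with infinity show ?thesis
      by simp
  next
    case 3
    with infinity[of x] show ?thesis
      by (simp add: conj_commute)
  qed
qed

lemma nested_blocks_containing_pair:
  assumes "x \<in> {..n}" "y \<in> {..n}" "x \<noteq> y"
  shows "card {k \<in> index. x \<in> insert (nest_point k) (block k) \<and> y \<in> insert (nest_point k) (block k)} \<le> 2"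
proof -
  have infinity: "card {k \<in> index. n \<in> insert (nest_point k) (block k) \<and> z \<in> insert (nest_point k) (block k)} \<le> 2"
    if "z < n" for z
    using that card_nested_short_blocks_containing_infinity[of z m c] infinity_notin_nested_block_Inl
    by (simp add: card_index_Collect)
  consider "x < n" "y < n" | "x = n" "y < n" | "y = n" "x < n"
    using assms by fastforce
  then show ?thesis
  proof cases
    case 1
    have "card {k \<in> index. x \<in> insert (nest_point k) (block k) \<and> y \<in> insert (nest_point k) (block k)}
        = count_list (concat (map (\<lambda>(D, p). diff_list n (p # D)) Ds)) (zdiff n x y)
          + card {i \<in> {..<m}. x \<in> insert (i + c) (short_block m i) \<and> y \<in> insert (i + c) (short_block m i)}"
      unfolding card_index_Collect card_nested_developments_containing_pair[OF 1 \<open>x \<noteq> y\<close>] by simp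
    then show ?thesis
      using card_nested_short_blocks_containing_pair[OF shift 1 \<open>x \<noteq> y\<close>]
        nested_differences[of "zdiff n x y"]
      by linarith
  next
    case 2
    with infinity show ?thesis
      by simp
  next
    case 3
    with infinity[of x] show ?thesis
      by (simp add: conj_commute)
  qed
qed

theorem nested_bibd: "nested_bibd {..n} (image_mset block (mset_set index)) (n + 1)"
proof -
  have "finite index"
    by (simp add: index_def)
  then have "nested_bibd {..n} (image_mset block (mset_set index)) (card {..n})"
    by (rule nested_bibd_of_indexed_blocks[OF _ _ block_wellformed blocks_containing_pair
          nested_blocks_containing_pair]) simp
  then show ?thesis
    by simp
qed

corollary exists_nested_bibd: "\<exists>X :: nat set. \<exists>B. nested_bibd X B (3 * m + 1)"
  using nested_bibd by blast

end

lemma cyclic_nesting_by_evaluation: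
  assumes "0 < c" "c < m" "(2 * c) mod m \<noteq> 0" "list_all (is_nested_block (3 * m)) Ds"
    and "msort (concat (map (diff_list (3 * m) \<circ> fst) Ds)) = nonmultiples m"
    and "no_triples (msort (concat (map (\<lambda>(D, p). diff_list (3 * m) (p # D)) Ds)
           @ remdups (diff_list (3 * m) [c, 0, m, 2 * m])))"
  shows "cyclic_nesting m c Ds"
proof
  fix d
  have "count_list (concat (map (diff_list (3 * m) \<circ> fst) Ds)) d = count_list (nonmultiples m) d"
    using assms(5) count_list_msort by metis
  also have "\<dots> = (if d < 3 * m \<and> d mod m \<noteq> 0 then 1 else 0)"
    by (rule count_list_nonmultiples)
  finally show "count_list (concat (map (diff_list (3 * m) \<circ> fst) Ds)) d
      = (if d < 3 * m \<and> d mod m \<noteq> 0 then 1 else 0)" .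
  show "count_list (concat (map (\<lambda>(D, p). diff_list (3 * m) (p # D)) Ds)) d
      + (if d \<in> set (diff_list (3 * m) [c, 0, m, 2 * m]) then 1 else 0) \<le> 2"
    using count_list_le_2_if_msort_no_triples[OF assms(6), of d] by (simp add: count_list_distinct)
qed (use assms in auto)

section \<open>Explicitly listed designs\<close>

definition pair_codes :: "nat \<Rightarrow> nat list \<Rightarrow> nat list" where
  "pair_codes v B = map (\<lambda>(a, b). a * v + b) (filter (\<lambda>(a, b). a < b) (List.product B B))"

lemma count_pair_codes:
  assumes "distinct B" "set B \<subseteq> {..<v}" "x < y" "y < v"
  shows "count_list (pair_codes v B) (x * v + y) = (if x \<in> set B \<and> y \<in> set B then 1 else 0)"
proof -
  have code: "a * v + b = x * v + y \<longleftrightarrow> a = x \<and> b = y" if "b < v" for a b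
    using that assms(4) by (metis add.commute add_right_cancel div_mult_self1 div_less mod_mult_self1 mod_less not_less0 plus_nat.add_0)
  have "count_list (pair_codes v B) (x * v + y)
      = card {z \<in> set (filter (\<lambda>(a, b). a < b) (List.product B B)). (\<lambda>(a, b). a * v + b) z = x * v + y}"
    unfolding pair_codes_def using assms(1) by (intro count_list_map_distinct) (simp add: distinct_product)
  also have "{z \<in> set (filter (\<lambda>(a, b). a < b) (List.product B B)). (\<lambda>(a, b). a * v + b) z = x * v + y}
      = (if x \<in> set B \<and> y \<in> set B then {(x, y)} else {})"
    using assms code by auto
  finally show ?thesis
    by simp
qed

lemma card_blocks_containing_pair_eq_count_pair_codes:
  fixes t :: nat
  assumes "\<And>k. k < t \<Longrightarrow> distinct (G k) \<and> set (G k) \<subseteq> {..<v}" "x < y" "y < v"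
  shows "card {k \<in> {..<t}. x \<in> set (G k) \<and> y \<in> set (G k)}
       = (\<Sum>k<t. count_list (pair_codes v (G k)) (x * v + y))"
proof -
  have "card {k \<in> {..<t}. x \<in> set (G k) \<and> y \<in> set (G k)}
      = (\<Sum>k<t. if x \<in> set (G k) \<and> y \<in> set (G k) then 1 else 0)"
    by (simp add: sum.inter_filter[symmetric])
  also have "\<dots> = (\<Sum>k<t. count_list (pair_codes v (G k)) (x * v + y))"
    using assms by (intro sum.cong refl) (simp add: count_pair_codes)
  finally show ?thesis .
qed

(* The same list as pair_codes v [0..<v], in a form that is much cheaper to evaluate. *)
definition all_pair_codes :: "nat \<Rightarrow> nat list" where
  "all_pair_codes v = concat (map (\<lambda>a. map (\<lambda>b. a * v + b) [Suc a..<v]) [0..<v])"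

lemma filter_less_upt: "filter (\<lambda>b. a < b) [0..<v] = [Suc a..<v]"
  by (induction v) auto

lemma all_pair_codes_eq: "all_pair_codes v = pair_codes v [0..<v]"
  unfolding all_pair_codes_def pair_codes_def
  by (simp add: product_concat_map filter_concat map_concat filter_map o_def filter_less_upt)

lemma nested_bibd_of_block_list:
  assumes blocks: "list_all (is_nested_block v) Bs"
    and pairs_once: "msort (concat (map (pair_codes v \<circ> fst) Bs)) = all_pair_codes v"
    and pairs_twice: "no_triples (msort (concat (map (\<lambda>(B, p). pair_codes v (p # B)) Bs)))"
  shows "nested_bibd {..<v} (image_mset (\<lambda>k. set (fst (Bs ! k))) (mset_set {..<length Bs})) v"
proof -
  note B = nested_block_nth[OF blocks]
  note count = card_blocks_containing_pair_eq_count_pair_codes[where t = "length Bs"]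
  have once: "card {k \<in> {..<length Bs}. x \<in> set (fst (Bs ! k)) \<and> y \<in> set (fst (Bs ! k))} = 1"
    if "x < y" "y < v" for x y
  proof -
    have "card {k \<in> {..<length Bs}. x \<in> set (fst (Bs ! k)) \<and> y \<in> set (fst (Bs ! k))}
        = count_list (concat (map (pair_codes v \<circ> fst) Bs)) (x * v + y)"
      using count[where G = "\<lambda>k. fst (Bs ! k)" and x = x and y = y] B that by (simp add: count_list_concat_map_eq_sum)
    also have "\<dots> = count_list (pair_codes v [0..<v]) (x * v + y)"
      by (metis pairs_once count_list_msort all_pair_codes_eq)
    also have "\<dots> = 1"
      using that count_pair_codes[of "[0..<v]" v x y] by (simp add: atLeast0LessThan)
    finally show ?thesis .
  qed
  have twice: "card {k \<in> {..<length Bs}. x \<in> set (snd (Bs ! k) # fst (Bs ! k)) \<and> y \<in> set (snd (Bs ! k) # fst (Bs ! k))} \<le> 2"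
    if "x < y" "y < v" for x y
  proof -
    have "card {k \<in> {..<length Bs}. x \<in> set (snd (Bs ! k) # fst (Bs ! k)) \<and> y \<in> set (snd (Bs ! k) # fst (Bs ! k))}
        = count_list (concat (map (\<lambda>(B, p). pair_codes v (p # B)) Bs)) (x * v + y)"
      using count[where G = "\<lambda>k. snd (Bs ! k) # fst (Bs ! k)" and x = x and y = y] B that
      by (simp add: count_list_concat_map_eq_sum case_prod_beta)
    also have "\<dots> \<le> 2"
      by (rule count_list_le_2_if_msort_no_triples[OF pairs_twice])
    finally show ?thesis .
  qed
  have "nested_bibd {..<v} (image_mset (\<lambda>k. set (fst (Bs ! k))) (mset_set {..<length Bs})) (card {..<v})"
  proof (rule nested_bibd_of_indexed_blocks[where nest = "\<lambda>k. snd (Bs ! k)"])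
    fix x y :: nat assume "x \<in> {..<v}" "y \<in> {..<v}" "x \<noteq> y"
    then show "card {k \<in> {..<length Bs}. x \<in> set (fst (Bs ! k)) \<and> y \<in> set (fst (Bs ! k))} = 1"
      and "card {k \<in> {..<length Bs}. x \<in> insert (snd (Bs ! k)) (set (fst (Bs ! k)))
          \<and> y \<in> insert (snd (Bs ! k)) (set (fst (Bs ! k)))} \<le> 2"
      using once[of x y] once[of y x] twice[of x y] twice[of y x]
      by (auto simp: conj_commute elim!: neqE)
  qed (use B in \<open>auto simp: distinct_card\<close>)
  then show ?thesis
    by simp
qed

lemma nested_bibd_16: "\<exists>X :: nat set. \<exists>B. nested_bibd X B 16"
  by (intro exI, rule nested_bibd_of_block_list[where Bs =
      "[([0, 1, 9, 13], 12), ([1, 2, 10, 14], 3), ([0, 2, 3, 11], 7), ([1, 3, 4, 12], 8),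
       ([2, 4, 5, 13], 0), ([3, 5, 6, 14], 13), ([0, 4, 6, 7], 14), ([1, 5, 7, 8], 6),
       ([2, 6, 8, 9], 11), ([3, 7, 9, 10], 4), ([4, 8, 10, 11], 13), ([5, 9, 11, 12], 10),
       ([6, 10, 12, 13], 2), ([7, 11, 13, 14], 1), ([0, 8, 12, 14], 15), ([0, 5, 10, 15], 1),
       ([1, 6, 11, 15], 4), ([2, 7, 12, 15], 5), ([3, 8, 13, 15], 9), ([4, 9, 14, 15], 2)]"])
    (simp_all add: is_nested_block_def pair_codes_def all_pair_codes_def upt_rec)

lemma nested_bibd_28: "\<exists>X :: nat set. \<exists>B. nested_bibd X B 28"
  by (intro exI, rule nested_bibd_of_block_list[where Bs =
      "[([0, 13, 14, 20], 24), ([1, 12, 14, 18], 6), ([2, 12, 13, 19], 11),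
       ([3, 16, 17, 23], 12), ([4, 15, 17, 21], 7), ([5, 15, 16, 22], 19),
       ([6, 10, 11, 26], 5), ([7, 9, 11, 24], 25), ([8, 9, 10, 25], 15), ([2, 9, 22, 23], 21),
       ([0, 10, 21, 23], 8), ([1, 11, 21, 22], 24), ([5, 12, 25, 26], 13),
       ([3, 13, 24, 26], 6), ([4, 14, 24, 25], 8), ([8, 15, 19, 20], 6), ([6, 16, 18, 20], 21),
       ([7, 17, 18, 19], 14), ([4, 5, 11, 18], 9), ([3, 5, 9, 19], 8), ([3, 4, 10, 20], 16),
       ([7, 8, 14, 21], 26), ([6, 8, 12, 22], 7), ([6, 7, 13, 23], 0), ([1, 2, 17, 24], 16),
       ([0, 2, 15, 25], 18), ([0, 1, 16, 26], 15), ([0, 3, 7, 22], 11), ([1, 4, 8, 23], 11),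
       ([2, 5, 6, 21], 4), ([1, 3, 6, 25], 17), ([2, 4, 7, 26], 3), ([0, 5, 8, 24], 2),
       ([0, 4, 6, 19], 25), ([1, 5, 7, 20], 23), ([2, 3, 8, 18], 1), ([4, 9, 12, 16], 0),
       ([5, 10, 13, 17], 22), ([3, 11, 14, 15], 20), ([7, 10, 12, 15], 24),
       ([8, 11, 13, 16], 18), ([6, 9, 14, 17], 27), ([1, 9, 13, 15], 14),
       ([2, 10, 14, 16], 23), ([0, 11, 12, 17], 21), ([13, 18, 21, 25], 10),
       ([14, 19, 22, 26], 12), ([12, 20, 23, 24], 18), ([16, 19, 21, 24], 27),
       ([17, 20, 22, 25], 2), ([15, 18, 23, 26], 22), ([10, 18, 22, 24], 3),
       ([11, 19, 23, 25], 26), ([9, 20, 21, 26], 1), ([0, 9, 18, 27], 26),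
       ([5, 14, 23, 27], 3), ([1, 10, 19, 27], 0), ([2, 11, 20, 27], 10),
       ([6, 15, 24, 27], 23), ([7, 16, 25, 27], 5), ([3, 12, 21, 27], 15),
       ([4, 13, 22, 27], 1), ([8, 17, 26, 27], 20)]"])
    (simp_all add: is_nested_block_def pair_codes_def all_pair_codes_def upt_rec)

lemma nested_bibd_40: "\<exists>X :: nat set. \<exists>B. nested_bibd X B 40"
proof -
  have "cyclic_nesting 13 1
     [([0, 1, 6, 31], 24), ([0, 2, 12, 23], 4), ([0, 3, 20, 35], 9)]"
    by (rule cyclic_nesting_by_evaluation)
      (simp_all add: is_nested_block_def diff_list_def zdiff_def nonmultiples_def upt_rec)
  from cyclic_nesting.exists_nested_bibd[OF this] show ?thesis
    by simp
qed

lemma nested_bibd_52: "\<exists>X :: nat set. \<exists>B. nested_bibd X B 52"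
proof -
  have "cyclic_nesting 17 15
     [([0, 1, 3, 16], 43), ([0, 4, 9, 29], 25), ([0, 6, 33, 43], 20), ([0, 7, 19, 30], 12)]"
    by (rule cyclic_nesting_by_evaluation)
      (simp_all add: is_nested_block_def diff_list_def zdiff_def nonmultiples_def upt_rec)
  from cyclic_nesting.exists_nested_bibd[OF this] show ?thesis
    by simp
qed

lemma nested_bibd_64: "\<exists>X :: nat set. \<exists>B. nested_bibd X B 64"
proof -
  have "cyclic_nesting 21 12
     [([0, 1, 26, 36], 60), ([0, 2, 15, 56], 7), ([0, 3, 19, 49], 47), ([0, 4, 12, 43], 25),
      ([0, 5, 23, 57], 46)]"
    by (rule cyclic_nesting_by_evaluation)
      (simp_all add: is_nested_block_def diff_list_def zdiff_def nonmultiples_def upt_rec)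
  from cyclic_nesting.exists_nested_bibd[OF this] show ?thesis
    by simp
qed

lemma nested_bibd_76: "\<exists>X :: nat set. \<exists>B. nested_bibd X B 76"
proof -
  have "cyclic_nesting 25 16
     [([0, 1, 65, 72], 26), ([0, 2, 29, 37], 42), ([0, 5, 21, 63], 3), ([0, 6, 24, 55], 54),
      ([0, 9, 39, 61], 67), ([0, 13, 41, 56], 37)]"
    by (rule cyclic_nesting_by_evaluation)
      (simp_all add: is_nested_block_def diff_list_def zdiff_def nonmultiples_def upt_rec)
  from cyclic_nesting.exists_nested_bibd[OF this] show ?thesis
    by simp
qed

lemma nested_bibd_88: "\<exists>X :: nat set. \<exists>B. nested_bibd X B 88"
proof -
  have "cyclic_nesting 29 26
     [([0, 1, 48, 65], 12), ([0, 2, 35, 44], 45), ([0, 3, 72, 82], 68), ([0, 4, 20, 31], 37),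
      ([0, 6, 38, 68], 8), ([0, 7, 28, 41], 48), ([0, 12, 36, 73], 52)]"
    by (rule cyclic_nesting_by_evaluation)
      (simp_all add: is_nested_block_def diff_list_def zdiff_def nonmultiples_def upt_rec)
  from cyclic_nesting.exists_nested_bibd[OF this] show ?thesis
    by simp
qed

lemma nested_bibd_100: "\<exists>X :: nat set. \<exists>B. nested_bibd X B 100"
proof -
  have "cyclic_nesting 33 6
     [([0, 1, 52, 59], 81), ([0, 2, 20, 24], 9), ([0, 3, 49, 93], 98), ([0, 5, 19, 35], 61),
      ([0, 8, 45, 73], 20), ([0, 10, 25, 86], 8), ([0, 11, 42, 78], 14), ([0, 12, 39, 82], 52)]"
    by (rule cyclic_nesting_by_evaluation)
      (simp_all add: is_nested_block_def diff_list_def zdiff_def nonmultiples_def upt_rec)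
  from cyclic_nesting.exists_nested_bibd[OF this] show ?thesis
    by simp
qed

lemma nested_bibd_112: "\<exists>X :: nat set. \<exists>B. nested_bibd X B 112"
proof -
  have "cyclic_nesting 37 22
     [([0, 1, 100, 104], 5), ([0, 2, 68, 96], 85), ([0, 3, 29, 60], 39), ([0, 5, 55, 64], 14),
      ([0, 6, 24, 101], 68), ([0, 13, 38, 78], 84), ([0, 14, 36, 84], 37),
      ([0, 19, 49, 91], 73), ([0, 21, 44, 79], 19)]"
    by (rule cyclic_nesting_by_evaluation)
      (simp_all add: is_nested_block_def diff_list_def zdiff_def nonmultiples_def upt_rec)
  from cyclic_nesting.exists_nested_bibd[OF this] show ?thesis
    by simp
qed

lemma nested_bibd_124: "\<exists>X :: nat set. \<exists>B. nested_bibd X B 124"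
proof -
  have "cyclic_nesting 41 26
     [([0, 1, 51, 111], 73), ([0, 2, 16, 40], 33), ([0, 3, 90, 118], 77),
      ([0, 4, 65, 117], 118), ([0, 7, 55, 101], 120), ([0, 9, 43, 97], 45),
      ([0, 11, 78, 103], 23), ([0, 15, 32, 96], 59), ([0, 18, 57, 104], 75),
      ([0, 21, 70, 100], 84)]"
    by (rule cyclic_nesting_by_evaluation)
      (simp_all add: is_nested_block_def diff_list_def zdiff_def nonmultiples_def upt_rec)
  from cyclic_nesting.exists_nested_bibd[OF this] show ?thesis
    by simp
qed

lemma nested_bibd_136: "\<exists>X :: nat set. \<exists>B. nested_bibd X B 136"
proof -
  have "cyclic_nesting 45 35
     [([0, 1, 110, 129], 95), ([0, 2, 54, 69], 53), ([0, 3, 74, 101], 113),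
      ([0, 4, 117, 125], 54), ([0, 5, 49, 105], 29), ([0, 9, 41, 89], 11),
      ([0, 11, 28, 88], 56), ([0, 12, 65, 96], 60), ([0, 13, 85, 106], 129),
      ([0, 16, 36, 59], 62), ([0, 24, 62, 102], 93)]"
    by (rule cyclic_nesting_by_evaluation)
      (simp_all add: is_nested_block_def diff_list_def zdiff_def nonmultiples_def upt_rec)
  from cyclic_nesting.exists_nested_bibd[OF this] show ?thesis
    by simp
qed

lemma nested_bibd_148: "\<exists>X :: nat set. \<exists>B. nested_bibd X B 148"
proof -
  have "cyclic_nesting 49 15
     [([0, 1, 13, 102], 53), ([0, 2, 50, 85], 73), ([0, 3, 90, 127], 126),
      ([0, 4, 47, 74], 54), ([0, 5, 24, 68], 138), ([0, 6, 94, 136], 90), ([0, 7, 32, 41], 2),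
      ([0, 8, 30, 86], 118), ([0, 10, 36, 118], 91), ([0, 14, 81, 109], 99),
      ([0, 15, 31, 107], 82), ([0, 18, 51, 72], 130)]"
    by (rule cyclic_nesting_by_evaluation)
      (simp_all add: is_nested_block_def diff_list_def zdiff_def nonmultiples_def upt_rec)
  from cyclic_nesting.exists_nested_bibd[OF this] show ?thesis
    by simp
qed

lemma nested_bibd_160: "\<exists>X :: nat set. \<exists>B. nested_bibd X B 160"
proof -
  have "cyclic_nesting 53 13
     [([0, 1, 152, 154], 20), ([0, 3, 52, 141], 36), ([0, 4, 66, 134], 76),
      ([0, 9, 42, 121], 18), ([0, 10, 84, 139], 125), ([0, 11, 56, 146], 91),
      ([0, 12, 77, 113], 128), ([0, 14, 64, 125], 3), ([0, 15, 31, 54], 96),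
      ([0, 17, 43, 119], 102), ([0, 19, 51, 86], 133), ([0, 22, 81, 118], 86),
      ([0, 27, 71, 99], 50)]"
    by (rule cyclic_nesting_by_evaluation)
      (simp_all add: is_nested_block_def diff_list_def zdiff_def nonmultiples_def upt_rec)
  from cyclic_nesting.exists_nested_bibd[OF this] show ?thesis
    by simp
qed

lemma nested_bibd_172: "\<exists>X :: nat set. \<exists>B. nested_bibd X B 172"
proof -
  have "cyclic_nesting 57 44
     [([0, 1, 49, 63], 79), ([0, 2, 146, 158], 117), ([0, 3, 19, 47], 21),
      ([0, 4, 120, 140], 106), ([0, 5, 107, 118], 67), ([0, 6, 86, 153], 103),
      ([0, 7, 45, 79], 132), ([0, 8, 90, 119], 55), ([0, 9, 39, 110], 98),
      ([0, 10, 84, 125], 3), ([0, 17, 59, 95], 37), ([0, 21, 43, 75], 15),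
      ([0, 23, 88, 121], 27), ([0, 26, 66, 103], 166)]"
    by (rule cyclic_nesting_by_evaluation)
      (simp_all add: is_nested_block_def diff_list_def zdiff_def nonmultiples_def upt_rec)
  from cyclic_nesting.exists_nested_bibd[OF this] show ?thesis
    by simp
qed

lemma nested_bibd_184: "\<exists>X :: nat set. \<exists>B. nested_bibd X B 184"
proof -
  have "cyclic_nesting 61 43
     [([0, 1, 71, 121], 49), ([0, 2, 11, 102], 21), ([0, 3, 135, 157], 30),
      ([0, 4, 31, 140], 172), ([0, 5, 15, 119], 118), ([0, 6, 147, 159], 154),
      ([0, 7, 53, 108], 174), ([0, 8, 85, 151], 145), ([0, 13, 80, 99], 133),
      ([0, 14, 138, 158], 83), ([0, 16, 54, 126], 101), ([0, 17, 93, 142], 116),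
      ([0, 18, 105, 149], 92), ([0, 21, 115, 148], 152), ([0, 23, 60, 88], 68)]"
    by (rule cyclic_nesting_by_evaluation)
      (simp_all add: is_nested_block_def diff_list_def zdiff_def nonmultiples_def upt_rec)
  from cyclic_nesting.exists_nested_bibd[OF this] show ?thesis
    by simp
qed

lemma nested_bibd_196: "\<exists>X :: nat set. \<exists>B. nested_bibd X B 196"
proof -
  have "cyclic_nesting 65 25
     [([0, 1, 141, 185], 139), ([0, 2, 39, 128], 179), ([0, 3, 179, 191], 26),
      ([0, 5, 95, 157], 75), ([0, 6, 135, 180], 130), ([0, 8, 41, 87], 182),
      ([0, 9, 119, 172], 87), ([0, 13, 72, 94], 171), ([0, 14, 42, 91], 48),
      ([0, 17, 47, 78], 159), ([0, 18, 70, 138], 185), ([0, 20, 102, 131], 109),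
      ([0, 24, 112, 139], 63), ([0, 25, 73, 169], 58), ([0, 34, 92, 132], 31),
      ([0, 35, 71, 121], 62)]"
    by (rule cyclic_nesting_by_evaluation)
      (simp_all add: is_nested_block_def diff_list_def zdiff_def nonmultiples_def upt_rec)
  from cyclic_nesting.exists_nested_bibd[OF this] show ?thesis
    by simp
qed

theorem mainTheorem9:
  fixes v :: nat
  assumes "v mod 12 = 4" and "16 \<le> v" and "v \<le> 196"
  shows "\<exists>X :: nat set. \<exists>B. nested_bibd X B v"
proof -
  have "v = 16 \<or> v = 28 \<or> v = 40 \<or> v = 52 \<or> v = 64 \<or> v = 76 \<or> v = 88 \<or> v = 100 \<or>
      v = 112 \<or> v = 124 \<or> v = 136 \<or> v = 148 \<or> v = 160 \<or> v = 172 \<or> v = 184 \<or> v = 196"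
    using assms by presburger
  then show ?thesis
    using nested_bibd_16 nested_bibd_28 nested_bibd_40 nested_bibd_52 nested_bibd_64
      nested_bibd_76 nested_bibd_88 nested_bibd_100 nested_bibd_112 nested_bibd_124
      nested_bibd_136 nested_bibd_148 nested_bibd_160 nested_bibd_172 nested_bibd_184
      nested_bibd_196
    by (elim disjE) simp_all
qed

end
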